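(* Fix $k\ge3$. Consider the recursive network formation model with the utility function described in the context. Instead of a single node, the process starts from the base graph for the $k$-star: $2k$ nodes, namely $k$ pairwise adjacent centers, each also adjacent to exactly one distinct leaf. Suppose $$\gamma=0,\qquad c=b_1-b_3,\qquad b_2-b_3<c_0<b_2-b_4.$$ Then the resulting topology is a $k$-star: for every $n\ge 2k$, the pairwise stable network reached when the network has $n$ nodes is a $k$-star network on $n$ nodes, irrespective of the random order in which nodes are selected to move.
   Context: A $k$-star network ($k\ge3$) on $n\ge 2k$ nodes consists of $k$ "center" nodes that are pairwise adjacent, forming a clique. Every other node is a leaf adjacent to exactly one center and to nothing else. Each center has at least one leaf, and the numbers of leaves of any two centers differ by at most one. Networks are finite simple undirected graphs whose vertices (nodes) are self-interested agents. Parameters: benefits $b_1>b_2>b_3>b_4>\dots>0$, where $b_i$ is the benefit a node obtains from a node at distance $i$; a link cost $c$ per immediate neighbor; an intermediation fraction $\gamma$ with $0\le\gamma<1$; and a network entry factor $c_0$. Notation: $N$ is the set of nodes currently in the network, $d_j$ the degree of $j$, and $l(j,w)$ the graph distance. A node $x$ is essential for a pair $y,z$ (with $x\notin\{y,z\}$) if $x$ lies on every path joining $y$ and $z$. Write $E(y,z)$ for the set of nodes essential for $y,z$ and $e(y,z)=|E(y,z)|$. Only pairs joined by a path contribute to the sums below. Utility of node $j$ in network $g$: $$u_j(g)=-c_0\,d_{T(j)}\mathbf 1_{\{j=\mathrm{NE}\}}+d_j(b_1-c)+\sum_{w\in N,\ l(j,w)>1}b_{l(j,w)}-\sum_{w\in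 N,\ E(j,w)\ne\emptyset}\gamma\, b_{l(j,w)}+\sum_{y,z\in N,\ j\in E(y,z)}\frac{\gamma}{e(y,z)}\,2\,b_{l(y,z)}.$$ Here $\mathbf 1_{\{j=\mathrm{NE}\}}=1$ exactly when $j$ is a newly entering node evaluating the creation of its first link. $T(j)$ is the existing node to which $j$ forms that first link, and $d_{T(j)}$ is that node's degree before the link. The network before entry gives the entering node utility $0$. Pairwise stability: $g$ is pairwise stable if (a) for every link $(i,j)\in g$, $u_i(g\setminus\{(i,j)\})\le u_i(g)$ and $u_j(g\setminus\{(i,j)\})\le u_j(g)$; and (b) for every non-link $(i,j)\notin g$, if $u_i(g\cup\{(i,j)\})>u_i(g)$ then $u_j(g\cup\{(i,j)\})<u_j(g)$. Recursive model of network formation (from a given base graph): - When the current network of $n-1$ nodes is pairwise stable, a new node considers entering. Its options are to stay out or to propose a link to one existing node. The link forms iff the receiving node's utility does not decrease. No existing node can link to the newcomer before it has formed this first link. - After entry, nodes are repeatedly chosen at random to move. A chosen node plays a myopic best response among three options: create a link with a non-neighbor (the link forms only if the other node's utility does not decrease, which the proposer anticipates); delete a link with a neighbor (unilaterally); or keep the status quo. It alters a link only if this strictly increases its current utility. - This continues until the network is pairwise stable; then the next node considers entering, and so on. *)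

theory Defs
  imports Complex_Main
begin

text \<open>A network with n nodes has node set {..<n}; its links are 2-element
  sets {i,j} of nodes.  Parameters: benefit function b (b i = benefit from a node
  at distance i, only i >= 1 is used), link cost c, intermediation fraction gam,
  entry factor c0.\<close>

definition nbrs :: "nat set set \<Rightarrow> nat \<Rightarrow> nat set" where
  "nbrs E j = {w. {j, w} \<in> E \<and> w \<noteq> j}"

definition deg :: "nat set set \<Rightarrow> nat \<Rightarrow> nat" where
  "deg E j = card (nbrs E j)"

fun walk :: "nat set set \<Rightarrow> nat list \<Rightarrow> bool" where
  "walk E [] = True"
| "walk E [x] = True"
| "walk E (x # y # xs) = ({x, y} \<in> E \<and> x \<noteq> y \<and> walk E (y # xs))"

definition walk_betw :: "nat set set \<Rightarrow> nat \<Rightarrow> nat list \<Rightarrow> nat \<Rightarrow> bool" where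
  "walk_betw E y xs z = (xs \<noteq> [] \<and> walk E xs \<and> hd xs = y \<and> last xs = z)"

definition reach :: "nat set set \<Rightarrow> nat \<Rightarrow> nat \<Rightarrow> bool" where
  "reach E y z = (\<exists>xs. walk_betw E y xs z)"

text \<open>graph distance l(y,z): number of links of a shortest walk\<close>
definition dist :: "nat set set \<Rightarrow> nat \<Rightarrow> nat \<Rightarrow> nat" where
  "dist E y z = (LEAST m. \<exists>xs. walk_betw E y xs z \<and> length xs = Suc m)"

definition essential :: "nat set set \<Rightarrow> nat \<Rightarrow> nat \<Rightarrow> nat \<Rightarrow> bool" where
  "essential E x y z = (x \<notin> {y, z} \<and> (\<forall>xs. walk_betw E y xs z \<longrightarrow> x \<in> set xs))"

definition ess_set :: "nat \<Rightarrow> nat set set \<Rightarrow> nat \<Rightarrow> nat \<Rightarrow> nat set" where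
  "ess_set n E y z = {x \<in> {..<n}. essential E x y z}"

text \<open>Utility of node j in network (n,E), without the entry term.\<close>
definition util :: "(nat \<Rightarrow> real) \<Rightarrow> real \<Rightarrow> real \<Rightarrow> nat \<Rightarrow> nat set set \<Rightarrow> nat \<Rightarrow> real" where
  "util b c gam n E j =
     real (deg E j) * (b 1 - c)
     + (\<Sum>w\<in>{w\<in>{..<n}. reach E j w \<and> dist E j w > 1}. b (dist E j w))
     - (\<Sum>w\<in>{w\<in>{..<n}. reach E j w \<and> ess_set n E j w \<noteq> {}}. gam * b (dist E j w))
     + (\<Sum>p\<in>{(y, z). y < n \<and> z < n \<and> y < z \<and> reach E y z \<and> j \<in> ess_set n E y z}.
          gam / real (card (ess_set n E (fst p) (snd p))) * 2 * b (dist E (fst p) (snd p)))"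

definition pairwise_stable ::
  "(nat \<Rightarrow> real) \<Rightarrow> real \<Rightarrow> real \<Rightarrow> nat \<Rightarrow> nat set set \<Rightarrow> bool" where
  "pairwise_stable b c gam n E =
     ((\<forall>i<n. \<forall>j<n. i \<noteq> j \<and> {i, j} \<in> E \<longrightarrow>
          util b c gam n (E - {{i, j}}) i \<le> util b c gam n E i)
    \<and> (\<forall>i<n. \<forall>j<n. i \<noteq> j \<and> {i, j} \<notin> E \<and>
          util b c gam n (insert {i, j} E) i > util b c gam n E i \<longrightarrow>
          util b c gam n (insert {i, j} E) j < util b c gam n E j))"

definition options ::
  "(nat \<Rightarrow> real) \<Rightarrow> real \<Rightarrow> real \<Rightarrow> nat \<Rightarrow> nat set set \<Rightarrow> nat \<Rightarrow> nat set set set" where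
  "options b c gam n E i =
     {E}
     \<union> {insert {i, j} E | j. j < n \<and> j \<noteq> i \<and> {i, j} \<notin> E \<and>
           util b c gam n (insert {i, j} E) j \<ge> util b c gam n E j}
     \<union> {E - {{i, j}} | j. j < n \<and> j \<noteq> i \<and> {i, j} \<in> E}"

definition move ::
  "(nat \<Rightarrow> real) \<Rightarrow> real \<Rightarrow> real \<Rightarrow> nat \<Rightarrow> nat set set \<Rightarrow> nat set set \<Rightarrow> bool" where
  "move b c gam n E E' =
     (\<exists>i<n. E' \<in> options b c gam n E i
        \<and> util b c gam n E' i > util b c gam n E i
        \<and> (\<forall>E''\<in>options b c gam n E i. util b c gam n E'' i \<le> util b c gam n E' i))"

definition entry_value ::
  "(nat \<Rightarrow> real) \<Rightarrow> real \<Rightarrow> real \<Rightarrow> real \<Rightarrow> nat \<Rightarrow> nat set set \<Rightarrow> nat \<Rightarrow> real" where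
  "entry_value b c gam c0 n E t =
     util b c gam (Suc n) (insert {n, t} E) n - c0 * real (deg E t)"

definition entry_feasible ::
  "(nat \<Rightarrow> real) \<Rightarrow> real \<Rightarrow> real \<Rightarrow> nat \<Rightarrow> nat set set \<Rightarrow> nat \<Rightarrow> bool" where
  "entry_feasible b c gam n E t =
     (t < n \<and> util b c gam (Suc n) (insert {n, t} E) t \<ge> util b c gam n E t)"

text \<open>Entry of node n: best response among staying out (utility 0) and linking to
  an accepting existing node t.\<close>
definition entry ::
  "(nat \<Rightarrow> real) \<Rightarrow> real \<Rightarrow> real \<Rightarrow> real \<Rightarrow> nat \<Rightarrow> nat set set \<Rightarrow> nat set set \<Rightarrow> bool" where
  "entry b c gam c0 n E E' =
     (\<exists>t. entry_feasible b c gam n E t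
        \<and> entry_value b c gam c0 n E t > 0
        \<and> (\<forall>t'. entry_feasible b c gam n E t' \<longrightarrow>
                 entry_value b c gam c0 n E t' \<le> entry_value b c gam c0 n E t)
        \<and> E' = insert {n, t} E)"

definition step ::
  "(nat \<Rightarrow> real) \<Rightarrow> real \<Rightarrow> real \<Rightarrow> real \<Rightarrow> nat \<times> nat set set \<Rightarrow> nat \<times> nat set set \<Rightarrow> bool" where
  "step b c gam c0 s s' =
     (case s of (n, E) \<Rightarrow> case s' of (n', E') \<Rightarrow>
        (pairwise_stable b c gam n E \<and> n' = Suc n \<and> entry b c gam c0 n E E')
      \<or> (\<not> pairwise_stable b c gam n E \<and> n' = n \<and> move b c gam n E E'))"

definition base_kstar :: "nat \<Rightarrow> nat set set" where
  "base_kstar k = {{i, j} | i j. i < k \<and> j < k \<and> i \<noteq> j} \<union> {{i, k + i} | i. i < k}"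

definition kstar :: "nat \<Rightarrow> nat \<Rightarrow> nat set set \<Rightarrow> bool" where
  "kstar k n E =
     (2 * k \<le> n
      \<and> (\<forall>e\<in>E. \<exists>i j. i < n \<and> j < n \<and> i \<noteq> j \<and> e = {i, j})
      \<and> (\<exists>C. C \<subseteq> {..<n} \<and> card C = k
           \<and> (\<forall>x\<in>C. \<forall>y\<in>C. x \<noteq> y \<longrightarrow> {x, y} \<in> E)
           \<and> (\<forall>l\<in>{..<n} - C. \<exists>x\<in>C. nbrs E l = {x})
           \<and> (\<forall>x\<in>C. card (nbrs E x - C) \<ge> 1)
           \<and> (\<forall>x\<in>C. \<forall>y\<in>C. card (nbrs E x - C) \<le> card (nbrs E y - C) + 1)))"

end

theory Submission
  imports Defs
begin

(* Nodes 0..k-1 are the centers; a network in which every later node l is a leaf attached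
   to the center f l is the star network star_net k n f.  Call it balanced when every
   center has a leaf and leaf counts differ by at most one.  The proof shows
   (1) balanced star networks are pairwise stable, so the process never changes a link;
   (2) an entrant to a balanced star network links to a least loaded center (a leaf or a
       fuller center is strictly worse), which keeps the network balanced, and such an
       entry is always available.
   The base graph is balanced, so induction along the process gives the theorem.

   Utilities are computed through distance labellings of the component of a node: with
   gam = 0 the utility is the sum of b (distance) over that component, direct neighbours
   counting b 1 - c instead.  Each configuration needed in (1) and (2) gets an explicit
   labelling; the resulting sums are compared termwise or evaluated by counting leaves. *)

text \<open>A distance labelling of the component S of j: h j = 0, h grows by at most one along
  links leaving S (so S is closed), and every other node of S has a neighbour in S one step
  closer to j.  Then S is exactly the set of nodes reachable from j and h is the distance.\<close>
definition dist_labelling :: "nat set set \<Rightarrow> nat set \<Rightarrow> nat \<Rightarrow> (nat \<Rightarrow> nat) \<Rightarrow> bool" where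
  "dist_labelling E S j h \<longleftrightarrow> j \<in> S \<and> h j = 0
     \<and> (\<forall>u v. {u, v} \<in> E \<longrightarrow> u \<noteq> v \<longrightarrow> u \<in> S \<longrightarrow> v \<in> S \<and> h v \<le> h u + 1)
     \<and> (\<forall>w\<in>S. w \<noteq> j \<longrightarrow> (\<exists>u\<in>S. {u, w} \<in> E \<and> h u + 1 = h w))"

lemma dist_labellingI:
  assumes "j \<in> S" "h j = 0"
    and "\<forall>u v. {u, v} \<in> E \<longrightarrow> u \<noteq> v \<longrightarrow> u \<in> S \<longrightarrow> v \<in> S \<and> h v \<le> h u + 1"
    and "\<And>w. w \<in> S \<Longrightarrow> w \<noteq> j \<Longrightarrow> p w \<in> S \<and> {p w, w} \<in> E \<and> h (p w) + 1 = h w"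
  shows "dist_labelling E S j h"
  using assms unfolding dist_labelling_def by metis

lemma walk_snoc:
  "walk E xs \<Longrightarrow> xs \<noteq> [] \<Longrightarrow> {last xs, w} \<in> E \<Longrightarrow> last xs \<noteq> w \<Longrightarrow> walk E (xs @ [w])"
  by (induction E xs rule: walk.induct) auto

lemma walk_label_bound:
  assumes closed: "\<forall>u v. {u, v} \<in> E \<longrightarrow> u \<noteq> v \<longrightarrow> u \<in> S \<longrightarrow> v \<in> S \<and> h v \<le> h u + 1"
  shows "walk E xs \<Longrightarrow> xs \<noteq> [] \<Longrightarrow> hd xs \<in> S \<Longrightarrow>
           last xs \<in> S \<and> h (last xs) \<le> h (hd xs) + (length xs - 1)"
proof (induction xs)
  case (Cons x xs)
  show ?case
  proof (cases xs)
    case (Cons y ys)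
    with Cons.prems have "{x, y} \<in> E" "x \<noteq> y" "walk E xs" "x \<in> S" by auto
    then have "y \<in> S" "h y \<le> h x + 1" using closed by auto
    then show ?thesis using Cons.IH \<open>walk E xs\<close> Cons by auto
  qed (use Cons in simp)
qed simp

lemma walk_along_labelling:
  assumes "dist_labelling E S j h" "w \<in> S"
  shows "\<exists>xs. walk_betw E j xs w \<and> length xs = Suc (h w)"
  using assms(2)
proof (induction "h w" arbitrary: w)
  case 0
  then have "w = j" using assms(1) unfolding dist_labelling_def by force
  then show ?case using assms(1) by (intro exI[of _ "[j]"]) (simp add: walk_betw_def dist_labelling_def)
next
  case (Suc d)
  then have "w \<noteq> j" using assms(1) unfolding dist_labelling_def by auto
  then obtain u where u: "u \<in> S" "{u, w} \<in> E" "h u + 1 = h w"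
    using Suc.prems assms(1) unfolding dist_labelling_def by blast
  then obtain xs where "walk_betw E j xs u" "length xs = Suc (h u)" using Suc by force
  moreover have "u \<noteq> w" using u(3) by auto
  ultimately show ?case using u walk_snoc[of E xs w]
    by (intro exI[of _ "xs @ [w]"]) (auto simp: walk_betw_def)
qed

lemma labelling_reach_dist:
  assumes lab: "dist_labelling E S j h"
  shows "reach E j w \<longleftrightarrow> w \<in> S" and "w \<in> S \<Longrightarrow> dist E j w = h w"
proof -
  have closed: "\<forall>u v. {u, v} \<in> E \<longrightarrow> u \<noteq> v \<longrightarrow> u \<in> S \<longrightarrow> v \<in> S \<and> h v \<le> h u + 1"
    and j: "j \<in> S" "h j = 0" using lab unfolding dist_labelling_def by auto
  show "reach E j w \<longleftrightarrow> w \<in> S"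
    using walk_label_bound[OF closed] walk_along_labelling[OF lab] j
    unfolding reach_def walk_betw_def by blast
  assume w: "w \<in> S"
  show "dist E j w = h w"
    unfolding dist_def
  proof (rule Least_equality)
    show "\<exists>xs. walk_betw E j xs w \<and> length xs = Suc (h w)" by (rule walk_along_labelling[OF lab w])
  next
    fix m assume "\<exists>xs. walk_betw E j xs w \<and> length xs = Suc m"
    then show "h w \<le> m" using walk_label_bound[OF closed] j by (force simp: walk_betw_def)
  qed
qed

lemma labelling_nbrs:
  assumes lab: "dist_labelling E S j h"
  shows "nbrs E j = {w \<in> S. w \<noteq> j \<and> h w = 1}"
proof (intro set_eqI iffI)
  have closed: "\<forall>u v. {u, v} \<in> E \<longrightarrow> u \<noteq> v \<longrightarrow> u \<in> S \<longrightarrow> v \<in> S \<and> h v \<le> h u + 1"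
    and j: "j \<in> S" "h j = 0"
    and pred: "\<forall>w\<in>S. w \<noteq> j \<longrightarrow> (\<exists>u\<in>S. {u, w} \<in> E \<and> h u + 1 = h w)"
    using lab unfolding dist_labelling_def by auto
  have hpos: "w \<in> S \<Longrightarrow> w \<noteq> j \<Longrightarrow> h w > 0" for w using pred by force
  fix w
  show "w \<in> {w \<in> S. w \<noteq> j \<and> h w = 1}" if "w \<in> nbrs E j"
    using that closed[rule_format, of j w] j hpos[of w] by (auto simp: nbrs_def)
  show "w \<in> nbrs E j" if w: "w \<in> {w \<in> S. w \<noteq> j \<and> h w = 1}"
  proof -
    obtain u where "u \<in> S" "{u, w} \<in> E" "h u + 1 = h w" using w pred by blast
    then show ?thesis using hpos[of u] w by (auto simp: nbrs_def)
  qed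
qed

definition link_value :: "(nat \<Rightarrow> real) \<Rightarrow> real \<Rightarrow> nat \<Rightarrow> real" where
  "link_value b c d = (if d = 1 then b 1 - c else b d)"

lemma util_by_labelling:
  assumes lab: "dist_labelling E S j h" and S: "S \<subseteq> {..<n}"
  shows "util b c 0 n E j = (\<Sum>w<n. if w \<in> S \<and> w \<noteq> j then link_value b c (h w) else 0)"
proof -
  have j: "j \<in> S" "h j = 0"
    and pred: "\<forall>w\<in>S. w \<noteq> j \<longrightarrow> (\<exists>u\<in>S. {u, w} \<in> E \<and> h u + 1 = h w)"
    using lab unfolding dist_labelling_def by auto
  have hpos: "w \<in> S \<Longrightarrow> w \<noteq> j \<Longrightarrow> h w > 0" for w using pred by force
  note reach = labelling_reach_dist(1)[OF lab] and dist = labelling_reach_dist(2)[OF lab]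
  have nbrs: "nbrs E j = {w\<in>{..<n}. w \<in> S \<and> w \<noteq> j \<and> h w = 1}"
    using labelling_nbrs[OF lab] S by auto
  have neighbours: "real (deg E j) * (b 1 - c)
      = (\<Sum>w<n. if w \<in> S \<and> w \<noteq> j \<and> h w = 1 then b 1 - c else 0)"
  proof -
    have "real (deg E j) * (b 1 - c) = (\<Sum>w\<in>{w\<in>{..<n}. w \<in> S \<and> w \<noteq> j \<and> h w = 1}. b 1 - c)"
      unfolding deg_def nbrs by simp
    then show ?thesis by (simp only: sum.inter_filter[OF finite_lessThan])
  qed
  have far: "{w\<in>{..<n}. reach E j w \<and> dist E j w > 1} = {w\<in>{..<n}. w \<in> S \<and> h w > 1}"
    using reach dist by auto
  have distant: "(\<Sum>w\<in>{w\<in>{..<n}. reach E j w \<and> dist E j w > 1}. b (dist E j w))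
      = (\<Sum>w<n. if w \<in> S \<and> h w > 1 then b (h w) else 0)"
  proof -
    have "(\<Sum>w\<in>{w\<in>{..<n}. reach E j w \<and> dist E j w > 1}. b (dist E j w))
        = (\<Sum>w\<in>{w\<in>{..<n}. w \<in> S \<and> h w > 1}. b (h w))"
      unfolding far by (rule sum.cong) (simp_all add: dist)
    then show ?thesis by (simp only: sum.inter_filter[OF finite_lessThan])
  qed
  have "util b c 0 n E j = real (deg E j) * (b 1 - c)
      + (\<Sum>w\<in>{w\<in>{..<n}. reach E j w \<and> dist E j w > 1}. b (dist E j w))"
    unfolding util_def by simp
  also have "\<dots> = (\<Sum>w<n. if w \<in> S \<and> w \<noteq> j then link_value b c (h w) else 0)"
    unfolding neighbours distant sum.distrib[symmetric]
  proof (rule sum.cong)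
    fix w
    show "(if w \<in> S \<and> w \<noteq> j \<and> h w = 1 then b 1 - c else 0) + (if w \<in> S \<and> h w > 1 then b (h w) else 0)
        = (if w \<in> S \<and> w \<noteq> j then link_value b c (h w) else 0)"
      using hpos[of w] j by (cases "w \<in> S \<and> w \<noteq> j") (auto simp: link_value_def)
  qed simp
  finally show ?thesis .
qed

text \<open>The star network on nodes 0..n-1 with centers 0..k-1, pairwise linked, in which every
  node l >= k is a leaf attached to the center f l.  We always take f to map everything
  into the centers.\<close>
definition star_net :: "nat \<Rightarrow> nat \<Rightarrow> (nat \<Rightarrow> nat) \<Rightarrow> nat set set" where
  "star_net k n f = {{i, j} | i j. i < k \<and> j < k \<and> i \<noteq> j} \<union> {{l, f l} | l. k \<le> l \<and> l < n}"

lemma star_net_edge: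
  assumes "\<forall>l. f l < k"
  shows "{u, v} \<in> star_net k n f \<longleftrightarrow>
           (u < k \<and> v < k \<and> u \<noteq> v) \<or> (k \<le> u \<and> u < n \<and> v = f u) \<or> (k \<le> v \<and> v < n \<and> u = f v)"
  using assms unfolding star_net_def by (auto simp: doubleton_eq_iff)

lemma center_map_simps:
  fixes f :: "nat \<Rightarrow> nat"
  assumes "\<forall>l. f l < k"
  shows "(k \<le> f w) = False" and "k \<le> m \<Longrightarrow> (f w = m) = False" and "k \<le> m \<Longrightarrow> (m = f w) = False"
proof -
  have "f w < k" using assms by blast
  then show "(k \<le> f w) = False" and "k \<le> m \<Longrightarrow> (f w = m) = False"
    and "k \<le> m \<Longrightarrow> (m = f w) = False" by auto
qed

lemma util_center:
  assumes fk: "\<forall>l. f l < k" and kn: "k \<le> n" and x: "x < k"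
  shows "util b c 0 n (star_net k n f) x = (\<Sum>w<n. if w = x then 0 else if w < k then b 1 - c
            else if f w = x then b 1 - c else b 2)"
proof -
  define h where "h w = (if w = x then 0 else if w < k \<or> f w = x then 1 else (2::nat))" for w
  have "dist_labelling (star_net k n f) {..<n} x h"
    by (rule dist_labellingI[where p = "\<lambda>w. if w < k \<or> f w = x then x else f w"])
      (use fk kn x in \<open>auto simp: star_net_edge center_map_simps[OF fk] h_def less_le_trans[OF _ kn]\<close>)
  then show ?thesis
    by (simp add: util_by_labelling) (rule sum.cong, auto simp: h_def link_value_def)
qed

lemma util_leaf:
  assumes fk: "\<forall>l. f l < k" and kn: "k \<le> n" and l: "k \<le> l" "l < n"
  shows "util b c 0 n (star_net k n f) l = (\<Sum>w<n. if w = l then 0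
            else if w < k then (if w = f l then b 1 - c else b 2)
            else if f w = f l then b 2 else b 3)"
proof -
  define h where "h w = (if w = l then 0 else if w = f l then 1
                         else if w < k \<or> f w = f l then 2 else (3::nat))" for w
  have "dist_labelling (star_net k n f) {..<n} l h"
    by (rule dist_labellingI[where p = "\<lambda>w. if w = f l then l else if w < k \<or> f w = f l then f l else f w"])
      (use fk kn l in \<open>auto simp: star_net_edge center_map_simps[OF fk] h_def less_le_trans[OF _ kn]\<close>)
  then show ?thesis
    by (simp add: util_by_labelling) (rule sum.cong, use fk in \<open>auto simp: h_def link_value_def\<close>)
qed

text \<open>Center i after cutting its link to center j: j is reached in 2 steps through a third
  center z (here k >= 3 is used), and the leaves of j in 3 steps.\<close>
lemma util_center_unlink_center:
  assumes fk: "\<forall>l. f l < k" and kn: "k \<le> n" and k3: "3 \<le> k"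
    and ij: "i < k" "j < k" "i \<noteq> j"
  shows "util b c 0 n (star_net k n f - {{i, j}}) i = (\<Sum>w<n. if w = i then 0
            else if w < k then (if w = j then b 2 else b 1 - c)
            else if f w = i then b 1 - c else if f w = j then b 3 else b 2)"
proof -
  have "\<exists>z<3. z \<noteq> i \<and> z \<noteq> j" by presburger
  then obtain z where "z < 3" "z \<noteq> i" "z \<noteq> j" by blast
  then have z: "z < k" "z \<noteq> i" "z \<noteq> j" using k3 by simp_all
  define h where "h w = (if w = i then 0 else if w = j then 2 else if w < k \<or> f w = i then 1
                         else if f w = j then 3 else (2::nat))" for w
  have "dist_labelling (star_net k n f - {{i, j}}) {..<n} i h"
    by (rule dist_labellingI[where p = "\<lambda>w. if w = j then z else if w < k \<or> f w = i then i else f w"])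
      (use fk kn ij z in \<open>auto simp: star_net_edge center_map_simps[OF fk] h_def less_le_trans[OF _ kn] doubleton_eq_iff\<close>)
  then show ?thesis
    by (simp add: util_by_labelling) (rule sum.cong, use ij in \<open>auto simp: h_def link_value_def\<close>)
qed

lemma util_center_unlink_leaf:
  assumes fk: "\<forall>l. f l < k" and kn: "k \<le> n" and l: "k \<le> l" "l < n"
  shows "util b c 0 n (star_net k n f - {{f l, l}}) (f l) = (\<Sum>w<n. if w = f l \<or> w = l then 0
            else if w < k then b 1 - c else if f w = f l then b 1 - c else b 2)"
proof -
  define x where "x = f l"
  define h where "h w = (if w = x then 0 else if w < k \<or> f w = x then 1 else (2::nat))" for w
  have "dist_labelling (star_net k n f - {{x, l}}) ({..<n} - {l}) x h"
    by (rule dist_labellingI[where p = "\<lambda>w. if w < k \<or> f w = x then x else f w"])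
      (use fk kn l in \<open>auto simp: star_net_edge center_map_simps[OF fk] h_def x_def less_le_trans[OF _ kn] doubleton_eq_iff\<close>)
  then have "util b c 0 n (star_net k n f - {{x, l}}) x
      = (\<Sum>w<n. if w \<in> {..<n} - {l} \<and> w \<noteq> x then link_value b c (h w) else 0)"
    by (rule util_by_labelling) auto
  then show ?thesis unfolding x_def
    by simp (rule sum.cong, auto simp: h_def x_def link_value_def)
qed

lemma util_leaf_unlink:
  assumes fk: "\<forall>l. f l < k" and l: "k \<le> l" "l < n"
  shows "util b c 0 n (star_net k n f - {{l, f l}}) l = 0"
proof -
  have "dist_labelling (star_net k n f - {{l, f l}}) {l} l (\<lambda>_. 0)"
    by (rule dist_labellingI) (use fk l in \<open>auto simp: star_net_edge center_map_simps[OF fk] doubleton_eq_iff\<close>)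
  then show ?thesis using l by (simp add: util_by_labelling)
qed

lemma util_center_link_leaf:
  assumes fk: "\<forall>l. f l < k" and kn: "k \<le> n" and x: "x < k"
    and l: "k \<le> l" "l < n" "f l \<noteq> x"
  shows "util b c 0 n (insert {x, l} (star_net k n f)) x = (\<Sum>w<n. if w = x then 0
            else if w < k \<or> w = l \<or> f w = x then b 1 - c else b 2)"
proof -
  define h where "h w = (if w = x then 0 else if w < k \<or> w = l \<or> f w = x then 1 else (2::nat))" for w
  have "dist_labelling (insert {x, l} (star_net k n f)) {..<n} x h"
    by (rule dist_labellingI[where p = "\<lambda>w. if w < k \<or> w = l \<or> f w = x then x else f w"])
      (use fk kn x l in \<open>auto simp: star_net_edge center_map_simps[OF fk] h_def less_le_trans[OF _ kn] doubleton_eq_iff\<close>)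
  then show ?thesis
    by (simp add: util_by_labelling) (rule sum.cong, auto simp: h_def link_value_def)
qed

lemma util_leaf_link_leaf:
  assumes fk: "\<forall>l. f l < k" and kn: "k \<le> n"
    and l: "k \<le> l" "l < n" "k \<le> l'" "l' < n" "l \<noteq> l'"
  shows "util b c 0 n (insert {l, l'} (star_net k n f)) l = (\<Sum>w<n. if w = l then 0
            else if w < k then (if w = f l then b 1 - c else b 2)
            else if w = l' then b 1 - c else if f w = f l then b 2 else b 3)"
proof -
  define h where "h w = (if w = l then 0 else if w = f l \<or> w = l' then 1
                         else if w < k \<or> f w = f l then 2 else (3::nat))" for w
  have "dist_labelling (insert {l, l'} (star_net k n f)) {..<n} l h"
    by (rule dist_labellingI[where p = "\<lambda>w. if w = f l \<or> w = l' then l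
                                          else if w < k \<or> f w = f l then f l else f w"])
      (use fk kn l in \<open>auto simp: star_net_edge center_map_simps[OF fk] h_def less_le_trans[OF _ kn] doubleton_eq_iff\<close>)
  then show ?thesis
    by (simp add: util_by_labelling) (rule sum.cong, use fk l in \<open>auto simp: h_def link_value_def\<close>)
qed

lemma util_entrant_at_leaf:
  assumes fk: "\<forall>l. f l < k" and kn: "k \<le> n" and t: "k \<le> t" "t < n"
  shows "util b c 0 (Suc n) (insert {n, t} (star_net k n f)) n = (\<Sum>w<n.
            if w < k then (if w = f t then b 2 else b 3)
            else if w = t then b 1 - c else if f w = f t then b 3 else b 4)"
proof -
  define h where "h w = (if w = n then 0 else if w = t then 1 else if w = f t then 2
                         else if w < k \<or> f w = f t then 3 else (4::nat))" for w
  have "dist_labelling (insert {n, t} (star_net k n f)) {..<Suc n} n h"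
    by (rule dist_labellingI[where p = "\<lambda>w. if w = t then n else if w = f t then t
                                          else if w < k \<or> f w = f t then f t else f w"])
      (use fk kn t in \<open>auto simp: star_net_edge center_map_simps[OF fk] h_def less_le_trans[OF _ kn] doubleton_eq_iff less_Suc_eq\<close>)
  then show ?thesis
    by (simp add: util_by_labelling sum.lessThan_Suc)
      (rule sum.cong, use fk t in \<open>auto simp: h_def link_value_def\<close>)
qed

definition leaf_count :: "nat \<Rightarrow> nat \<Rightarrow> (nat \<Rightarrow> nat) \<Rightarrow> nat \<Rightarrow> nat" where
  "leaf_count k n f x = card {l \<in> {k..<n}. f l = x}"

lemma sum_if_count:
  assumes "finite A"
  shows "(\<Sum>w\<in>A. if P w then a else d)
       = real (card {w\<in>A. P w}) * a + (real (card A) - real (card {w\<in>A. P w})) * (d::real)"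
proof -
  have "{w\<in>A. \<not> P w} = A - {w\<in>A. P w}" by auto
  then have "real (card {w\<in>A. \<not> P w}) = real (card A) - real (card {w\<in>A. P w})"
    using assms by (simp add: card_Diff_subset of_nat_diff card_mono)
  moreover have "(\<Sum>w\<in>A. if P w then a else d) = (\<Sum>w\<in>{w\<in>A. P w}. a) + (\<Sum>w\<in>{w\<in>A. \<not> P w}. d)"
    using assms by (simp add: sum.If_cases Collect_conj_eq Int_commute Diff_eq[symmetric] set_diff_eq)
  ultimately show ?thesis by simp
qed

lemma sum_centers:
  assumes "t < k"
  shows "(\<Sum>w<k. if w = t then p else q) = p + (real k - 1) * (q::real)"
proof -
  have "{w\<in>{..<k}. w = t} = {t}" using assms by auto
  then show ?thesis by (simp add: sum_if_count)
qed

lemma sum_leaves: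
  assumes "k \<le> n"
  shows "(\<Sum>w\<in>{k..<n}. if f w = x then a else d)
       = real (leaf_count k n f x) * a + (real n - real k - real (leaf_count k n f x)) * (d::real)"
  using assms by (simp add: sum_if_count leaf_count_def of_nat_diff)

lemma sum_leaves_but_one:
  assumes "k \<le> t" "t < n"
  shows "(\<Sum>w\<in>{k..<n}. if w = t then p else if f w = f t then a else d)
       = p + (real (leaf_count k n f (f t)) - 1) * a
           + (real n - real k - real (leaf_count k n f (f t))) * (d::real)"
proof -
  let ?g = "\<lambda>w. if f w = f t then a else d"
  have t: "t \<in> {k..<n}" using assms by simp
  have "(\<Sum>w\<in>{k..<n}. if w = t then p else ?g w) = p + (\<Sum>w\<in>{k..<n} - {t}. if w = t then p else ?g w)"
    by (simp add: sum.remove[OF _ t])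
  also have "(\<Sum>w\<in>{k..<n} - {t}. if w = t then p else ?g w) = (\<Sum>w\<in>{k..<n} - {t}. ?g w)"
    by (rule sum.cong) auto
  also have "\<dots> = (\<Sum>w\<in>{k..<n}. ?g w) - a"
    using t by (simp add: sum_diff1)
  finally have "(\<Sum>w\<in>{k..<n}. if w = t then p else ?g w) = p + ((\<Sum>w\<in>{k..<n}. ?g w) - a)" .
  then show ?thesis using assms by (simp add: sum_leaves algebra_simps)
qed

lemma sum_split_centers_leaves:
  fixes k n :: nat
  assumes "k \<le> n"
  shows "(\<Sum>w<n. g w) = (\<Sum>w<k. g w) + (\<Sum>w\<in>{k..<n}. g w)"
proof -
  have "{..<n} = {..<k} \<union> {k..<n}" using assms by auto
  then show ?thesis by (simp add: sum.union_disjoint ivl_disj_int)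
qed

lemma sum_leaf_counts:
  assumes "\<forall>l. f l < k"
  shows "(\<Sum>x<k. leaf_count k n f x) = n - k"
proof -
  have "card (\<Union>x<k. {l\<in>{k..<n}. f l = x}) = (\<Sum>x<k. card {l\<in>{k..<n}. f l = x})"
    by (rule card_UN_disjoint) auto
  moreover have "(\<Union>x<k. {l\<in>{k..<n}. f l = x}) = {k..<n}" using assms by auto
  ultimately show ?thesis unfolding leaf_count_def by simp
qed

lemma deg_center:
  assumes fk: "\<forall>l. f l < k" and t: "t < k"
  shows "deg (star_net k n f) t = k - 1 + leaf_count k n f t"
proof -
  have "nbrs (star_net k n f) t = ({..<k} - {t}) \<union> {l\<in>{k..<n}. f l = t}"
    using t fk by (auto simp: nbrs_def star_net_edge)
  moreover have "card (({..<k} - {t}) \<union> {l\<in>{k..<n}. f l = t})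
      = card ({..<k} - {t}) + card {l\<in>{k..<n}. f l = t}"
    by (rule card_Un_disjoint) auto
  ultimately show ?thesis unfolding deg_def leaf_count_def using t by simp
qed

lemma nbrs_leaf:
  assumes fk: "\<forall>l. f l < k" and l: "k \<le> l" "l < n"
  shows "nbrs (star_net k n f) l = {f l}"
  using l fk by (auto simp: nbrs_def star_net_edge center_map_simps[OF fk])

lemma star_net_entrant:
  assumes "k \<le> n"
  shows "insert {n, t} (star_net k n f) = star_net k (Suc n) (f(n := t))"
proof -
  have "{{l, (f(n := t)) l} | l. k \<le> l \<and> l < Suc n} = insert {n, t} {{l, f l} | l. k \<le> l \<and> l < n}"
    using assms by (auto simp: less_Suc_eq)
  then show ?thesis unfolding star_net_def by auto
qed

lemma leaf_count_entrant:
  assumes "k \<le> n"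
  shows "leaf_count k (Suc n) (f(n := t)) x = leaf_count k n f x + (if x = t then 1 else 0)"
proof -
  have "{l\<in>{k..<Suc n}. (f(n := t)) l = x} = {l\<in>{k..<n}. f l = x} \<union> (if x = t then {n} else {})"
    using assms by (auto simp: less_Suc_eq)
  then show ?thesis unfolding leaf_count_def by (auto simp: card_insert_if)
qed

lemma base_kstar_star_net:
  assumes "0 < k"
  shows "base_kstar k = star_net k (2 * k) (\<lambda>l. (l - k) mod k)"
proof -
  have "{{i, k + i} | i. i < k} = {{l, (l - k) mod k} | l. k \<le> l \<and> l < 2 * k}"
  proof (intro set_eqI iffI)
    fix e assume "e \<in> {{i, k + i} | i. i < k}"
    then obtain i where "i < k" "e = {i, k + i}" by auto
    then show "e \<in> {{l, (l - k) mod k} | l. k \<le> l \<and> l < 2 * k}"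
      by (intro CollectI exI[of _ "k + i"]) (auto simp: insert_commute)
  next
    fix e assume "e \<in> {{l, (l - k) mod k} | l. k \<le> l \<and> l < 2 * k}"
    then obtain l where "k \<le> l" "l < 2 * k" "e = {l, (l - k) mod k}" by auto
    then show "e \<in> {{i, k + i} | i. i < k}"
      by (intro CollectI exI[of _ "l - k"]) (auto simp: insert_commute)
  qed
  then show ?thesis unfolding base_kstar_def star_net_def by simp
qed

text \<open>The parameter regime of the theorem (apart from gam = 0, which is built into the
  utility lemmas above).\<close>
locale kstar_regime =
  fixes k :: nat and b :: "nat \<Rightarrow> real" and c c0 :: real
  assumes k3: "3 \<le> k"
    and b_pos: "\<forall>i\<ge>1. b i > 0"
    and b_decreasing: "\<forall>i\<ge>1. b (Suc i) < b i"
    and c_def: "c = b 1 - b 3"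
    and c0_lower: "b 2 - b 3 < c0" and c0_upper: "c0 < b 2 - b 4"
begin

lemma link_b1 [simp]: "b 1 - c = b 3" "b (Suc 0) - c = b 3"
  using c_def by simp_all

lemma b_facts: "0 < b 4" "b 4 < b 3" "b 3 < b 2"
  using b_pos b_decreasing[rule_format, of 3] b_decreasing[rule_format, of 2]
  by (simp_all add: numeral_eq_Suc)

text \<open>The invariant of the process: a star network in which every center has a leaf and the
  leaf counts of any two centers differ by at most one.\<close>
definition balanced :: "nat \<Rightarrow> (nat \<Rightarrow> nat) \<Rightarrow> bool" where
  "balanced n f \<longleftrightarrow> 2 * k \<le> n \<and> (\<forall>l. f l < k)
     \<and> (\<forall>x<k. 1 \<le> leaf_count k n f x)
     \<and> (\<forall>x<k. \<forall>y<k. leaf_count k n f x \<le> leaf_count k n f y + 1)"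

lemma balancedD:
  assumes "balanced n f"
  shows "\<forall>l. f l < k" "k \<le> n" "2 * k \<le> n" "x < k \<Longrightarrow> 1 \<le> leaf_count k n f x"
    "x < k \<Longrightarrow> y < k \<Longrightarrow> leaf_count k n f x \<le> leaf_count k n f y + 1"
  using assms unfolding balanced_def by auto

lemma balanced_leaf:
  assumes "balanced n f" "x < k"
  obtains l where "k \<le> l" "l < n" "f l = x"
proof -
  have "leaf_count k n f x \<noteq> 0" using assms unfolding balanced_def by fastforce
  then have "{l\<in>{k..<n}. f l = x} \<noteq> {}" unfolding leaf_count_def by (metis card.empty)
  then show ?thesis using that by auto
qed

text \<open>Cutting a center-center link does not pay: center j moves from distance 1 to 2 (from b 3
  up to b 2), but each leaf of j moves from distance 2 to 3 (from b 2 down to b 3), and j has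
  at least one leaf.\<close>
lemma unlink_center_unprofitable:
  assumes fk: "\<forall>l. f l < k" and kn: "k \<le> n"
    and ij: "i < k" "j < k" "i \<noteq> j" and l0: "k \<le> l0" "l0 < n" "f l0 = j"
  shows "util b c 0 n (star_net k n f - {{i, j}}) i \<le> util b c 0 n (star_net k n f) i"
proof -
  define loss where "loss w = (if w = i then 0 else if w < k then b 3 else if f w = i then b 3 else b 2)
     - (if w = i then 0 else if w < k then (if w = j then b 2 else b 3)
        else if f w = i then b 3 else if f w = j then b 3 else b 2)" for w
  have jl0: "{j, l0} \<subseteq> {..<n}" using ij l0 kn by auto
  have "(\<Sum>w<n. loss w) = (\<Sum>w\<in>{j, l0}. loss w) + (\<Sum>w\<in>{..<n} - {j, l0}. loss w)"
    using sum.subset_diff[OF jl0] by (simp add: add.commute)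
  moreover have "(\<Sum>w\<in>{j, l0}. loss w) = 0"
    \<comment> \<open>i gains b 2 - b 3 on j, now at distance 2, and loses as much on the leaf l0 of j\<close>
    using ij l0 by (simp add: loss_def)
  moreover have "(\<Sum>w\<in>{..<n} - {j, l0}. loss w) \<ge> 0"
    by (rule sum_nonneg) (use b_facts in \<open>auto simp: loss_def\<close>)
  ultimately have "(\<Sum>w<n. loss w) \<ge> 0" by linarith
  then show ?thesis
    unfolding util_center[OF fk kn ij(1)] util_center_unlink_center[OF fk kn k3 ij] link_b1
    by (simp add: loss_def sum_subtractf)
qed

lemma unlink_leaf_unprofitable_center:
  assumes fk: "\<forall>l. f l < k" and kn: "k \<le> n" and l: "k \<le> l" "l < n"
  shows "util b c 0 n (star_net k n f - {{f l, l}}) (f l) \<le> util b c 0 n (star_net k n f) (f l)"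
  unfolding util_center[OF fk kn fk[rule_format, of l]] util_center_unlink_leaf[OF fk kn l] link_b1
  by (rule sum_mono) (use b_facts in auto)

lemma unlink_unprofitable_leaf:
  assumes fk: "\<forall>l. f l < k" and kn: "k \<le> n" and l: "k \<le> l" "l < n"
  shows "util b c 0 n (star_net k n f - {{l, f l}}) l \<le> util b c 0 n (star_net k n f) l"
  unfolding util_leaf_unlink[OF fk l] util_leaf[OF fk kn l] link_b1
  by (rule sum_nonneg) (use b_facts in auto)

text \<open>A center strictly loses by linking to a foreign leaf, which drops from b 2 to b 3.\<close>
lemma center_link_leaf_unprofitable:
  assumes fk: "\<forall>l. f l < k" and kn: "k \<le> n" and x: "x < k"
    and l: "k \<le> l" "l < n" "f l \<noteq> x"
  shows "util b c 0 n (insert {x, l} (star_net k n f)) x < util b c 0 n (star_net k n f) x"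
  unfolding util_center[OF fk kn x] util_center_link_leaf[OF fk kn x l] link_b1
proof (rule sum_strict_mono_ex1)
  show "\<forall>w\<in>{..<n}. (if w = x then 0 else if w < k \<or> w = l \<or> f w = x then b 3 else b 2)
      \<le> (if w = x then 0 else if w < k then b 3 else if f w = x then b 3 else b 2)"
    using b_facts by auto
  show "\<exists>w\<in>{..<n}. (if w = x then 0 else if w < k \<or> w = l \<or> f w = x then b 3 else b 2)
      < (if w = x then 0 else if w < k then b 3 else if f w = x then b 3 else b 2)"
    using b_facts l x by (intro bexI[of _ l]) auto
qed simp

lemma leaf_link_leaf_unprofitable:
  assumes fk: "\<forall>l. f l < k" and kn: "k \<le> n"
    and l: "k \<le> l" "l < n" "k \<le> l'" "l' < n" "l \<noteq> l'"
  shows "util b c 0 n (insert {l, l'} (star_net k n f)) l \<le> util b c 0 n (star_net k n f) l"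
  unfolding util_leaf[OF fk kn l(1,2)] util_leaf_link_leaf[OF fk kn l] link_b1
  by (rule sum_mono) (use b_facts l in auto)

text \<open>Balanced star networks are pairwise stable: no link is worth cutting, and the only link
  a node could want is one the other end refuses.\<close>
theorem balanced_pairwise_stable:
  assumes bal: "balanced n f"
  shows "pairwise_stable b c 0 n (star_net k n f)"
proof -
  note fk = balancedD(1)[OF bal] and kn = balancedD(2)[OF bal]
  note edge = star_net_edge[OF fk]
  show ?thesis unfolding pairwise_stable_def
  proof (intro conjI allI impI)
    fix i j assume ij: "i < n" "j < n" "i \<noteq> j \<and> {i, j} \<in> star_net k n f"
    then consider (centers) "i < k" "j < k" | (leaf) "k \<le> i" "j = f i" | (center) "k \<le> j" "i = f j"
      using edge by auto
    then show "util b c 0 n (star_net k n f - {{i, j}}) i \<le> util b c 0 n (star_net k n f) i"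
    proof cases
      case centers
      obtain l0 where "k \<le> l0" "l0 < n" "f l0 = j" using balanced_leaf[OF bal centers(2)] .
      then show ?thesis using unlink_center_unprofitable[OF fk kn centers] ij by auto
    next
      case leaf
      then show ?thesis using unlink_unprofitable_leaf[OF fk kn leaf(1) ij(1)] by simp
    next
      case center
      then show ?thesis using unlink_leaf_unprofitable_center[OF fk kn center(1) ij(2)] by simp
    qed
  next
    fix i j assume ij: "i < n" "j < n"
      and new: "i \<noteq> j \<and> {i, j} \<notin> star_net k n f
        \<and> util b c 0 n (insert {i, j} (star_net k n f)) i > util b c 0 n (star_net k n f) i"
    have "i \<noteq> j" "{i, j} \<notin> star_net k n f" using new by auto
    \<comment> \<open>only a link between a leaf and a foreign center could be wanted, and the center refuses it\<close>
    then consider (center_leaf) "i < k" "k \<le> j" "f j \<noteq> i" | (leaf_center) "k \<le> i" "j < k" "f i \<noteq> j"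
      | (leaves) "k \<le> i" "k \<le> j"
      using ij edge[of i j] by (cases "i < k"; cases "j < k") auto
    then show "util b c 0 n (insert {i, j} (star_net k n f)) j < util b c 0 n (star_net k n f) j"
    proof cases
      case center_leaf
      then show ?thesis using center_link_leaf_unprofitable[OF fk kn center_leaf(1) _ ij(2)] new by auto
    next
      case leaf_center
      then show ?thesis
        using center_link_leaf_unprofitable[OF fk kn leaf_center(2) _ ij(1)] by (simp add: insert_commute)
    next
      case leaves
      then show ?thesis
        using leaf_link_leaf_unprofitable[OF fk kn leaves(1) ij(1) leaves(2) ij(2) \<open>i \<noteq> j\<close>] new by linarith
    qed
  qed
qed


lemma entry_value_center:
  assumes fk: "\<forall>l. f l < k" and kn: "k \<le> n" and t: "t < k"
  shows "entry_value b c 0 c0 n (star_net k n f) t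
       = b 3 + (real k - 1) * b 2 + real (leaf_count k n f t) * b 2
         + (real n - real k - real (leaf_count k n f t)) * b 3
         - c0 * (real k - 1 + real (leaf_count k n f t))"
proof -
  have fk': "\<forall>l. (f(n := t)) l < k" using fk t by simp
  have "util b c 0 (Suc n) (star_net k (Suc n) (f(n := t))) n
      = (\<Sum>w<Suc n. if w = n then 0 else if w < k then (if w = (f(n := t)) n then b 1 - c else b 2)
           else if (f(n := t)) w = (f(n := t)) n then b 2 else b 3)"
    by (rule util_leaf[OF fk' le_SucI[OF kn] kn lessI])
  also have "\<dots> = (\<Sum>w<n. if w < k then (if w = t then b 3 else b 2) else if f w = t then b 2 else b 3)"
    by (simp add: sum.lessThan_Suc del: fun_upd_apply) (rule sum.cong, auto)
  also have "\<dots> = b 3 + (real k - 1) * b 2 + real (leaf_count k n f t) * b 2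
         + (real n - real k - real (leaf_count k n f t)) * b 3"
    by (simp add: sum_split_centers_leaves[OF kn] sum_centers[OF t] sum_leaves[OF kn])
  finally have "util b c 0 (Suc n) (star_net k (Suc n) (f(n := t))) n = \<dots>" .
  moreover have "real (deg (star_net k n f) t) = real k - 1 + real (leaf_count k n f t)"
    using deg_center[OF fk t] t by (simp add: of_nat_diff)
  ultimately show ?thesis unfolding entry_value_def star_net_entrant[OF kn] by simp
qed

lemma entry_value_leaf:
  assumes fk: "\<forall>l. f l < k" and kn: "k \<le> n" and t: "k \<le> t" "t < n"
  shows "entry_value b c 0 c0 n (star_net k n f) t
       = b 2 + (real k - 1) * b 3 + b 3 + (real (leaf_count k n f (f t)) - 1) * b 3
         + (real n - real k - real (leaf_count k n f (f t))) * b 4 - c0"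
proof -
  have "util b c 0 (Suc n) (insert {n, t} (star_net k n f)) n
      = (\<Sum>w<k. if w = f t then b 2 else b 3)
        + (\<Sum>w\<in>{k..<n}. if w = t then b 3 else if f w = f t then b 3 else b 4)"
    unfolding util_entrant_at_leaf[OF fk kn t] link_b1 sum_split_centers_leaves[OF kn]
    by (intro arg_cong2[where f = "(+)"] sum.cong) auto
  then show ?thesis
    unfolding entry_value_def deg_def nbrs_leaf[OF fk t]
    by (simp add: sum_centers[OF fk[rule_format]] sum_leaves_but_one[OF t])
qed

text \<open>Centers always accept a newcomer: the new leaf is worth b 3 > 0 to them.\<close>
lemma entry_feasible_center:
  assumes fk: "\<forall>l. f l < k" and kn: "k \<le> n" and t: "t < k"
  shows "entry_feasible b c 0 n (star_net k n f) t"
proof -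
  have fk': "\<forall>l. (f(n := t)) l < k" using fk t by simp
  have "util b c 0 (Suc n) (star_net k (Suc n) (f(n := t))) t
      = (\<Sum>w<Suc n. if w = t then 0 else if w < k then b 1 - c
            else if (f(n := t)) w = t then b 1 - c else b 2)"
    by (rule util_center[OF fk' le_SucI[OF kn] t])
  also have "\<dots> = util b c 0 n (star_net k n f) t + (b 1 - c)"
    unfolding util_center[OF fk kn t] using t kn
    by (simp add: sum.lessThan_Suc) (rule sum.cong, auto)
  finally show ?thesis
    unfolding entry_feasible_def star_net_entrant[OF kn] using t kn b_facts by simp
qed

text \<open>Comparing two centers: the entry value falls with the leaf count, at rate
  c0 - (b 2 - b 3) > 0.\<close>
lemma entry_value_center_difference:
  assumes fk: "\<forall>l. f l < k" and kn: "k \<le> n" and t: "t < k" "t' < k"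
  shows "entry_value b c 0 c0 n (star_net k n f) t' - entry_value b c 0 c0 n (star_net k n f) t
       = (real (leaf_count k n f t') - real (leaf_count k n f t)) * (b 2 - b 3 - c0)"
  unfolding entry_value_center[OF fk kn t(1)] entry_value_center[OF fk kn t(2)]
  by (simp add: algebra_simps)

text \<open>Leaves not attached to a least loaded center tm nor to a center m: at least k - 2 of
  them, since every other center has one (and a least loaded center has at most the average).\<close>
lemma spare_leaves:
  assumes bal: "balanced n f" and tm: "tm < k" "\<forall>y<k. leaf_count k n f tm \<le> leaf_count k n f y"
    and m: "m < k"
  shows "real n - real k - real (leaf_count k n f tm) - real (leaf_count k n f m) \<ge> real k - 2"
proof -
  note fk = balancedD(1)[OF bal] and kn = balancedD(3)[OF bal] and pos = balancedD(4)[OF bal]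
  have total: "(\<Sum>x<k. leaf_count k n f x) = n - k" by (rule sum_leaf_counts[OF fk])
  show ?thesis
  proof (cases "m = tm")
    case True
    have "k * leaf_count k n f tm \<le> (\<Sum>x<k. leaf_count k n f x)"
      using sum_mono[of "{..<k}" "\<lambda>_. leaf_count k n f tm" "leaf_count k n f"] tm by simp
    then have "real k * real (leaf_count k n f tm) \<le> real n - real k"
      using total kn by (simp add: of_nat_diff flip: of_nat_mult)
    moreover have "(real k - 2) * (real (leaf_count k n f tm) - 1) \<ge> 0"
      using k3 pos[OF tm(1)] by (intro mult_nonneg_nonneg) auto
    ultimately show ?thesis using True by (simp add: algebra_simps)
  next
    case False
    have tmm: "{tm, m} \<subseteq> {..<k}" using tm m by auto
    have "k - 2 = (\<Sum>x\<in>{..<k} - {tm, m}. 1::nat)" using tmm False by (simp add: card_Diff_subset)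
    also have "\<dots> \<le> (\<Sum>x\<in>{..<k} - {tm, m}. leaf_count k n f x)" by (rule sum_mono) (use pos in auto)
    also have "\<dots> = n - k - leaf_count k n f tm - leaf_count k n f m"
      using sum.subset_diff[OF tmm, of "leaf_count k n f"] total False by simp
    finally show ?thesis using k3 by linarith
  qed
qed

text \<open>Linking to a leaf is strictly worse than linking to a least loaded center; this uses
  c0 < b 2 - b 4.\<close>
lemma entry_value_leaf_below:
  assumes bal: "balanced n f" and tm: "tm < k" "\<forall>y<k. leaf_count k n f tm \<le> leaf_count k n f y"
    and t: "k \<le> t" "t < n"
  shows "entry_value b c 0 c0 n (star_net k n f) t < entry_value b c 0 c0 n (star_net k n f) tm"
proof -
  note fk = balancedD(1)[OF bal] and kn = balancedD(2)[OF bal]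
  define L where "L = real (leaf_count k n f tm)"
  define X where "X = real n - real k - L - real (leaf_count k n f (f t)) - (real k - 2)"
  have X: "X \<ge> 0" using spare_leaves[OF bal tm fk[rule_format, of t]] unfolding X_def L_def by simp
  have "entry_value b c 0 c0 n (star_net k n f) tm - entry_value b c 0 c0 n (star_net k n f) t
      = (real k - 2 + L) * (b 2 - c0 - b 4) + X * (b 3 - b 4)"
    unfolding entry_value_center[OF fk kn tm(1)] entry_value_leaf[OF fk kn t] X_def L_def
    by (simp add: algebra_simps)
  moreover have "(real k - 2 + L) * (b 2 - c0 - b 4) > 0"
    using k3 c0_upper unfolding L_def by (intro mult_pos_pos) auto
  moreover have "X * (b 3 - b 4) \<ge> 0" using X b_facts by simp
  ultimately show ?thesis by linarith
qed

lemma entry_value_center_positive: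
  assumes bal: "balanced n f" and t: "t < k"
  shows "entry_value b c 0 c0 n (star_net k n f) t > 0"
proof -
  note fk = balancedD(1)[OF bal] and kn = balancedD(2)[OF bal]
  define L where "L = real (leaf_count k n f t)"
  have "leaf_count k n f t \<le> card {k..<n}"
    unfolding leaf_count_def by (rule card_mono) auto
  then have "(real n - real k - L) * b 3 \<ge> 0" using kn b_facts unfolding L_def by simp
  moreover have "(real k - 1 + L) * (b 2 - c0) \<ge> 0"
    using k3 c0_upper b_facts unfolding L_def by (intro mult_nonneg_nonneg) auto
  moreover have "entry_value b c 0 c0 n (star_net k n f) t
      = b 3 + (real k - 1 + L) * (b 2 - c0) + (real n - real k - L) * b 3"
    unfolding entry_value_center[OF fk kn t] L_def by (simp add: algebra_simps)
  ultimately show ?thesis using b_facts by linarith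
qed

lemma balanced_entrant:
  assumes bal: "balanced n f" and t: "t < k" "\<forall>y<k. leaf_count k n f t \<le> leaf_count k n f y"
  shows "balanced (Suc n) (f(n := t))"
  unfolding balanced_def leaf_count_entrant[OF balancedD(2)[OF bal]]
proof (intro conjI allI impI)
  show "2 * k \<le> Suc n" using balancedD(3)[OF bal] by simp
  show "(f(n := t)) l < k" for l using balancedD(1)[OF bal] t(1) by simp
  show "1 \<le> leaf_count k n f x + (if x = t then 1 else 0)" if "x < k" for x
    using balancedD(4)[OF bal that] by simp
  fix x y assume x: "x < k" and y: "y < k"
  show "leaf_count k n f x + (if x = t then 1 else 0) \<le> leaf_count k n f y + (if y = t then 1 else 0) + 1"
    using balancedD(5)[OF bal x y] balancedD(5)[OF bal x t(1)] t(2) x y by auto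
qed

lemma least_loaded_center:
  assumes "0 < k"
  obtains tm where "tm < k" "\<forall>y<k. leaf_count k n f tm \<le> leaf_count k n f y"
proof -
  have "Min (leaf_count k n f ` {..<k}) \<in> leaf_count k n f ` {..<k}"
    using assms by (intro Min_in) auto
  then obtain tm where "tm < k" "leaf_count k n f tm = Min (leaf_count k n f ` {..<k})" by auto
  then show ?thesis using that by simp
qed


lemma entry_from_balanced:
  assumes bal: "balanced n f" and e: "entry b c 0 c0 n (star_net k n f) E'"
  shows "\<exists>f'. balanced (Suc n) f' \<and> E' = star_net k (Suc n) f'"
proof -
  note fk = balancedD(1)[OF bal] and kn = balancedD(2)[OF bal]
  obtain tm where tm: "tm < k" "\<forall>y<k. leaf_count k n f tm \<le> leaf_count k n f y"
    using least_loaded_center[of n f] k3 by auto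
  obtain t where t: "entry_feasible b c 0 n (star_net k n f) t"
    "\<forall>t'. entry_feasible b c 0 n (star_net k n f) t' \<longrightarrow>
       entry_value b c 0 c0 n (star_net k n f) t' \<le> entry_value b c 0 c0 n (star_net k n f) t"
    "E' = insert {n, t} (star_net k n f)"
    using e unfolding entry_def by blast
  have best: "entry_value b c 0 c0 n (star_net k n f) tm \<le> entry_value b c 0 c0 n (star_net k n f) t"
    using t(2) entry_feasible_center[OF fk kn tm(1)] by blast
  have "t < n" using t(1) unfolding entry_feasible_def by simp
  have tk: "t < k"
  proof (rule ccontr)
    assume "\<not> t < k"
    then have "k \<le> t" by simp
    then show False using entry_value_leaf_below[OF bal tm _ \<open>t < n\<close>] best by linarith
  qed
  have "\<not> leaf_count k n f tm < leaf_count k n f t"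
  proof
    assume "leaf_count k n f tm < leaf_count k n f t"
    then have "(real (leaf_count k n f t) - real (leaf_count k n f tm)) * (b 2 - b 3 - c0) < 0"
      using c0_lower by (intro mult_pos_neg) auto
    then show False using entry_value_center_difference[OF fk kn tm(1) tk] best by linarith
  qed
  then have "\<forall>y<k. leaf_count k n f t \<le> leaf_count k n f y" using tm(2) by force
  then show ?thesis using balanced_entrant[OF bal tk] t(3) star_net_entrant[OF kn] by auto
qed

lemma entry_to_least_loaded:
  assumes bal: "balanced n f"
  obtains t where "entry b c 0 c0 n (star_net k n f) (star_net k (Suc n) (f(n := t)))"
    "balanced (Suc n) (f(n := t))"
proof -
  note fk = balancedD(1)[OF bal] and kn = balancedD(2)[OF bal]
  obtain tm where tm: "tm < k" "\<forall>y<k. leaf_count k n f tm \<le> leaf_count k n f y"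
    using least_loaded_center[of n f] k3 by auto
  have "entry b c 0 c0 n (star_net k n f) (star_net k (Suc n) (f(n := tm)))"
    unfolding entry_def
  proof (intro exI conjI allI impI)
    show "entry_feasible b c 0 n (star_net k n f) tm" by (rule entry_feasible_center[OF fk kn tm(1)])
    show "0 < entry_value b c 0 c0 n (star_net k n f) tm" by (rule entry_value_center_positive[OF bal tm(1)])
    show "star_net k (Suc n) (f(n := tm)) = insert {n, tm} (star_net k n f)"
      by (rule star_net_entrant[OF kn, symmetric])
  next
    fix t' assume "entry_feasible b c 0 n (star_net k n f) t'"
    then have "t' < n" unfolding entry_feasible_def by simp
    show "entry_value b c 0 c0 n (star_net k n f) t' \<le> entry_value b c 0 c0 n (star_net k n f) tm"
    proof (cases "t' < k")
      case True
      have "(real (leaf_count k n f t') - real (leaf_count k n f tm)) * (b 2 - b 3 - c0) \<le> 0"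
        using tm True c0_lower by (intro mult_nonneg_nonpos) auto
      then show ?thesis using entry_value_center_difference[OF fk kn tm(1) True] by linarith
    next
      case False
      then show ?thesis using entry_value_leaf_below[OF bal tm, of t'] \<open>t' < n\<close> by simp
    qed
  qed
  then show ?thesis using that balanced_entrant[OF bal tm] by blast
qed

lemma balanced_is_kstar:
  assumes bal: "balanced n f"
  shows "kstar k n (star_net k n f)"
proof -
  note fk = balancedD(1)[OF bal]
  have leaf_nbrs: "nbrs (star_net k n f) l = {f l}" if "l \<in> {..<n} - {..<k}" for l
    using that nbrs_leaf[OF fk] by auto
  have center_leaves: "nbrs (star_net k n f) x - {..<k} = {l\<in>{k..<n}. f l = x}" if "x < k" for x
    using that by (auto simp: nbrs_def star_net_edge[OF fk])
  have links: "\<forall>e\<in>star_net k n f. \<exists>i j. i < n \<and> j < n \<and> i \<noteq> j \<and> e = {i, j}"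
  proof
    fix e assume "e \<in> star_net k n f"
    then obtain i j where "e = {i, j}" "(i < k \<and> j < k \<and> i \<noteq> j) \<or> (k \<le> i \<and> i < n \<and> j = f i)"
      unfolding star_net_def by auto
    then show "\<exists>i j. i < n \<and> j < n \<and> i \<noteq> j \<and> e = {i, j}"
      using fk[rule_format, of i] balancedD(2)[OF bal] by (intro exI[of _ i] exI[of _ j]) auto
  qed
  show ?thesis unfolding kstar_def
  proof (intro conjI exI[of _ "{..<k}"])
    show "2 * k \<le> n" using balancedD(3)[OF bal] .
    show "{..<k} \<subseteq> {..<n}" using balancedD(2)[OF bal] by auto
    show "\<forall>x\<in>{..<k}. \<forall>y\<in>{..<k}. x \<noteq> y \<longrightarrow> {x, y} \<in> star_net k n f"
      by (auto simp: star_net_edge[OF fk])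
    show "\<forall>l\<in>{..<n} - {..<k}. \<exists>x\<in>{..<k}. nbrs (star_net k n f) l = {x}"
      using leaf_nbrs fk by auto
    show "\<forall>x\<in>{..<k}. 1 \<le> card (nbrs (star_net k n f) x - {..<k})"
      using center_leaves balancedD(4)[OF bal] unfolding leaf_count_def by auto
    show "\<forall>x\<in>{..<k}. \<forall>y\<in>{..<k}. card (nbrs (star_net k n f) x - {..<k})
        \<le> card (nbrs (star_net k n f) y - {..<k}) + 1"
      using center_leaves balancedD(5)[OF bal] unfolding leaf_count_def by auto
  qed (use links in simp_all)
qed


lemma base_balanced: "balanced (2 * k) (\<lambda>l. (l - k) mod k)"
proof -
  have "leaf_count k (2 * k) (\<lambda>l. (l - k) mod k) x = 1" if "x < k" for x
  proof -
    have "{l\<in>{k..<2 * k}. (l - k) mod k = x} = {k + x}" using that by auto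
    then show ?thesis unfolding leaf_count_def by simp
  qed
  then show ?thesis using k3 unfolding balanced_def by auto
qed

text \<open>Every state reached from the base graph is a balanced star network: these networks are
  pairwise stable, so the process only ever lets a new node enter.\<close>
lemma reachable_balanced:
  assumes "(step b c 0 c0)\<^sup>*\<^sup>* (2 * k, base_kstar k) s"
  shows "\<exists>f. balanced (fst s) f \<and> snd s = star_net k (fst s) f"
  using assms
proof (induction rule: rtranclp_induct)
  case base
  then show ?case using base_balanced base_kstar_star_net k3 by auto
next
  case (step s s')
  obtain n E n' E' where s: "s = (n, E)" "s' = (n', E')" by (cases s, cases s')
  obtain f where f: "balanced n f" "E = star_net k n f" using step.IH s by auto
  have "n' = Suc n" "entry b c 0 c0 n E E'"
    using step.hyps(2) balanced_pairwise_stable[OF f(1)] f(2) unfolding s step_def by auto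
  then show ?case using entry_from_balanced[OF f(1)] f(2) s by auto
qed

lemma every_size_reached:
  assumes "2 * k \<le> n"
  shows "\<exists>f. balanced n f \<and> (step b c 0 c0)\<^sup>*\<^sup>* (2 * k, base_kstar k) (n, star_net k n f)"
  using assms
proof (induction n rule: dec_induct)
  case base
  then show ?case using base_balanced base_kstar_star_net k3 by auto
next
  case (step n)
  then obtain f where f: "balanced n f" "(step b c 0 c0)\<^sup>*\<^sup>* (2 * k, base_kstar k) (n, star_net k n f)"
    by blast
  obtain t where t: "entry b c 0 c0 n (star_net k n f) (star_net k (Suc n) (f(n := t)))"
    "balanced (Suc n) (f(n := t))"
    using entry_to_least_loaded[OF f(1)] .
  have "step b c 0 c0 (n, star_net k n f) (Suc n, star_net k (Suc n) (f(n := t)))"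
    unfolding step_def using balanced_pairwise_stable[OF f(1)] t(1) by simp
  then show ?case using f(2) t(2) by (meson rtranclp.rtrancl_into_rtrancl)
qed

end

theorem theorem5:
  fixes k :: nat and b :: "nat \<Rightarrow> real" and c gam c0 :: real
  assumes "k \<ge> 3"
    and "\<forall>i\<ge>1. b i > 0"
    and "\<forall>i\<ge>1. b (Suc i) < b i"
    and "gam = 0"
    and "c = b 1 - b 3"
    and "b 2 - b 3 < c0" and "c0 < b 2 - b 4"
  shows "(\<forall>n E. (step b c gam c0)\<^sup>*\<^sup>* (2 * k, base_kstar k) (n, E)
                 \<and> pairwise_stable b c gam n E \<longrightarrow> kstar k n E)
       \<and> (\<forall>n\<ge>2 * k. \<exists>E. (step b c gam c0)\<^sup>*\<^sup>* (2 * k, base_kstar k) (n, E)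
                 \<and> pairwise_stable b c gam n E)"
proof -
  interpret kstar_regime k b c c0 using assms by unfold_locales auto
  show ?thesis unfolding \<open>gam = 0\<close>
  proof (intro conjI allI impI)
    fix n E assume "(step b c 0 c0)\<^sup>*\<^sup>* (2 * k, base_kstar k) (n, E) \<and> pairwise_stable b c 0 n E"
    then show "kstar k n E" using reachable_balanced[of "(n, E)"] balanced_is_kstar by auto
  next
    fix n :: nat assume "2 * k \<le> n"
    then show "\<exists>E. (step b c 0 c0)\<^sup>*\<^sup>* (2 * k, base_kstar k) (n, E) \<and> pairwise_stable b c 0 n E"
      using every_size_reached balanced_pairwise_stable by blast
  qed
qed

end
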